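(* Fix $\beta>0$ and $0<t_0<t<\infty$. Let $(C_n)_{n\ge1}$ be the solution on $[t_0,t]$ of $$C_1\equiv1,\qquad \dot C_n=(n-1)B\,C_n+\frac{n\Gamma}{2}\sum_{j=1}^{n-1}C_jC_{n-j}\quad(n\ge2),\qquad C_n(t_0)=0\ (n\ge2)$$ (the coefficient equations of $\Theta_t=\Gamma(z^2\Theta^2)_z+Bz\Theta_z$, $\Theta(t_0,\cdot)=1$), and set $\Theta(t,z)=\sum_{n\ge1}C_n(t)z^{n-1}$. Then for every $k\in\mathbb{N}$ and every $z\ge0$ with $e\,z\,\tau_k(t_0,t)<1$, $$\Theta(t,z)\le\frac{-1}{\tau_k(t_0,t)\,z}\,W\!\left(-\tau_k(t_0,t)\,z\right),\qquad \tau_k(t_0,t)=\int_{t_0}^t\Gamma(s)\exp\!\Big(\frac{k+1}{k}\int_s^tB(s')\,ds'\Big)ds .$$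
   Context: $g(s)=-\frac{s}{4\pi}\int_s^\infty K_0'''(r)\frac{r}{\sqrt{r^2-s^2}}dr$ for $s>0$ (a positive function), $K_0$ the modified Bessel function of the second kind of order $0$. $\Gamma(t)=\frac{\beta\pi}{4}t^2g(t)$ and $B(t)=\frac{\beta}{2}g(t)$. $W$ is the principal branch of the Lambert $W$ function, with $-W(-x)/x=\sum_{n\ge1}\frac{n^{n-1}}{n!}x^{n-1}$ for $0\le x\le1/e$ (value $1$ at $x=0$). *)

theory Defs
  imports "HOL-Analysis.Analysis"
begin

definition besselK0 :: "real \<Rightarrow> real" where
  "besselK0 r = (LINT u:{0..}|lborel. exp (- r * cosh u))"

definition g_fun :: "real \<Rightarrow> real" where
  "g_fun s = - (s / (4 * pi)) *
     (LINT r:{s<..}|lborel. (deriv ^^ 3) besselK0 r * r / sqrt (r\<^sup>2 - s\<^sup>2))"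

definition Gamma_fun :: "real \<Rightarrow> real \<Rightarrow> real" where
  "Gamma_fun \<beta> t = \<beta> * pi / 4 * t\<^sup>2 * g_fun t"

definition B_fun :: "real \<Rightarrow> real \<Rightarrow> real" where
  "B_fun \<beta> t = \<beta> / 2 * g_fun t"

text \<open>Principal branch of the Lambert W function (defined for x \<ge> -1/e):
  the unique w \<ge> -1 with w e^w = x.\<close>
definition lambertW :: "real \<Rightarrow> real" where
  "lambertW x = (THE w. -1 \<le> w \<and> w * exp w = x)"

definition negW_quot :: "real \<Rightarrow> real" where
  "negW_quot x = (if x = 0 then 1 else - lambertW (- x) / x)"

definition tau :: "real \<Rightarrow> nat \<Rightarrow> real \<Rightarrow> real \<Rightarrow> real" where
  "tau \<beta> k t0 t = integral {t0..t}
     (\<lambda>s. Gamma_fun \<beta> s * exp ((real k + 1) / real k * integral {s..t} (\<lambda>s'. B_fun \<beta> s')))"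

end

theory Submission
  imports Defs
begin

text \<open>Because \<open>\<Gamma> = (\<pi> s\<^sup>2/2) B\<close>, the coefficient system is solved by
  \<open>C\<^sub>n = a\<^sub>n C\<^sub>2\<^bsup>n-1\<^esup>\<close> with \<open>a\<^sub>n = n/(2(n-1)) \<Sum>\<^sub>j a\<^sub>j a\<^sub>n\<^sub>-\<^sub>j\<close>; uniqueness holds because
  \<open>H = C\<^sub>2 + \<pi> s\<^sup>2/2\<close> stays positive and is an integrating factor for the linear equation
  satisfied by the difference. Hence \<open>\<Theta>(t,z) = \<Sum> a\<^sub>n (C\<^sub>2(t) z)\<^bsup>n-1\<^esup>\<close>.
  Every partial sum \<open>Q\<close> of \<open>\<Sum> a\<^sub>n x\<^bsup>n-1\<^esup>\<close> satisfies \<open>x Q(x) e\<^bsup>-x Q(x)\<^esup> \<le> x\<close>, because the full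
  generating function solves \<open>Q' = Q (x Q)'\<close> and truncation only lowers the right-hand side;
  below \<open>1/e\<close> this forces \<open>x Q(x) \<le> -W(-x)\<close>. Finally
  \<open>C\<^sub>2(t) = \<integral>\<^sub>t\<^sub>0\<^sup>t \<Gamma>(s) exp (\<integral>\<^sub>s\<^sup>t B) ds \<le> \<tau>\<^sub>k\<close> because \<open>B \<ge> 0\<close>, and the sign of \<open>B\<close> comes from
  \<open>K\<^sub>0'''(r) = -\<integral>\<^sub>0\<^sup>\<infinity> cosh\<^sup>3 u e\<^bsup>-r cosh u\<^esup> du \<le> 0\<close>.\<close>

section \<open>The sign of \<open>g\<close>\<close>

definition cosh_moment :: "nat \<Rightarrow> real \<Rightarrow> real" where
  "cosh_moment m r = (LINT u:{0..}|lborel. cosh u ^ m * exp (- r * cosh u))"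

lemma half_le_cosh: "u / 2 \<le> cosh (u::real)"
proof -
  have "1 + u \<le> exp u" by (rule exp_ge_add_one_self)
  moreover have "0 < exp (- u)" by simp
  ultimately have "u \<le> exp u + exp (- u)" by linarith
  thus ?thesis by (simp add: cosh_def)
qed

lemma power_le_fact_mult_exp:
  fixes x :: real assumes "0 \<le> x"
  shows "x ^ m \<le> fact m * exp x"
proof -
  have "x ^ m / fact m \<le> (\<Sum>n\<le>m. x ^ n / fact n)"
    using assms by (intro member_le_sum) auto
  also have "\<dots> \<le> exp x"
    using assms summable_exp_generic[of x]
    by (auto simp: exp_def divide_inverse ac_simps intro!: sum_le_suminf)
  finally show ?thesis by (simp add: field_simps)
qed

lemma cosh_moment_integrand_le:
  fixes r :: real assumes "0 < r"
  shows "cosh u ^ m * exp (- r * cosh u) \<le> fact m * (2 / r) ^ m * exp (- (r / 2) * cosh u)"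
proof -
  have "(r / 2 * cosh u) ^ m \<le> fact m * exp (r / 2 * cosh u)"
    using assms cosh_real_nonneg[of u] by (intro power_le_fact_mult_exp) simp
  hence "(r / 2) ^ m * cosh u ^ m \<le> fact m * exp (r / 2 * cosh u)"
    by (simp only: power_mult_distrib)
  hence "cosh u ^ m \<le> fact m * (2 / r) ^ m * exp (r / 2 * cosh u)"
    using assms by (simp add: field_simps power_divide)
  hence "cosh u ^ m * exp (- r * cosh u)
      \<le> fact m * (2 / r) ^ m * exp (r / 2 * cosh u) * exp (- r * cosh u)"
    by (intro mult_right_mono) auto
  also have "\<dots> = fact m * (2 / r) ^ m * exp (- (r / 2) * cosh u)"
    by (simp add: mult.assoc flip: exp_add)
  finally show ?thesis .
qed

lemma set_integrable_cosh_moment: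
  fixes r :: real assumes "0 < r"
  shows "set_integrable lborel {0..} (\<lambda>u. cosh u ^ m * exp (- r * cosh u))"
proof -
  define M where "M = fact m * (2 / r) ^ m"
  have M: "0 \<le> M" using assms by (simp add: M_def)
  have "(\<lambda>u. exp (- (r / 4) * u)) integrable_on {0..}"
    using assms by (intro integrable_on_exp_minus_to_infinity) simp
  hence "set_integrable lebesgue {0..} (\<lambda>u. exp (- (r / 4) * u))"
    by (intro nonnegative_absolutely_integrable_1) auto
  hence "set_integrable lborel {0..} (\<lambda>u. exp (- (r / 4) * u))"
    unfolding set_integrable_def
    by (subst (asm) integrable_completion)
      (auto intro!: borel_measurable_continuous_on_indicator continuous_intros)
  hence dom: "integrable lborel (\<lambda>u. indicat_real {0..} u *\<^sub>R (M * exp (- (r / 4) * u)))"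
    unfolding set_integrable_def[symmetric] by (rule set_integrable_mult_right)
  have [measurable]: "(\<lambda>u. cosh u ^ m * exp (- r * cosh u)) \<in> borel_measurable borel"
    by (intro borel_measurable_continuous_onI continuous_intros)
  have "\<bar>cosh u ^ m * exp (- r * cosh u)\<bar> \<le> M * exp (- (r / 4) * u)" if "0 \<le> u" for u
  proof -
    have "cosh u ^ m * exp (- r * cosh u) \<le> M * exp (- (r / 2) * cosh u)"
      using cosh_moment_integrand_le[OF assms] by (simp add: M_def)
    also have "\<dots> \<le> M * exp (- (r / 4) * u)"
      using M half_le_cosh[of u] assms by (intro mult_left_mono) auto
    finally show ?thesis using cosh_real_nonneg[of u] by simp
  qed
  hence bound: "AE u in lborel. norm (indicat_real {0..} u *\<^sub>R (cosh u ^ m * exp (- r * cosh u)))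
      \<le> norm (indicat_real {0..} u *\<^sub>R (M * exp (- (r / 4) * u)))"
    using M by (intro AE_I2) (auto simp: indicator_def)
  show ?thesis
    unfolding set_integrable_def by (rule Bochner_Integration.integrable_bound[OF dom _ bound]) measurable
qed

lemma abs_exp_minus_one_minus_le: "\<bar>exp x - 1 - x\<bar> \<le> exp \<bar>x\<bar> * x\<^sup>2" for x :: real
proof -
  have "norm (exp x - (\<Sum>i\<le>1. x ^ i / fact i)) \<le> exp (norm x) * (norm x ^ Suc 1) / fact 1"
    by (rule Taylor_exp_field)
  hence "exp x - (1 + x) \<le> exp \<bar>x\<bar> * x\<^sup>2"
    by (simp add: power2_eq_square abs_if split: if_splits)
  moreover have "1 + x \<le> exp x" by (rule exp_ge_add_one_self)
  ultimately show ?thesis by (subst abs_of_nonneg) linarith+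
qed

lemma cosh_moment_quotient_integrand_bound:
  fixes c r h :: real
  assumes c: "0 \<le> c" and h: "h \<noteq> 0" "\<bar>h\<bar> \<le> r / 2"
  shows "\<bar>(c ^ m * exp (- (r + h) * c) - c ^ m * exp (- r * c)) / h + c ^ Suc m * exp (- r * c)\<bar>
    \<le> \<bar>h\<bar> * (c ^ Suc (Suc m) * exp (- (r / 2) * c))"
proof -
  have "(c ^ m * exp (- (r + h) * c) - c ^ m * exp (- r * c)) / h + c ^ Suc m * exp (- r * c)
      = c ^ m * exp (- r * c) * (exp (- h * c) - 1 - (- h * c)) / h"
    using h by (simp add: field_simps exp_add[symmetric] exp_diff)
  also have "\<bar>\<dots>\<bar> = c ^ m * exp (- r * c) * \<bar>exp (- h * c) - 1 - (- h * c)\<bar> / \<bar>h\<bar>"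
    using c by (simp add: abs_mult abs_divide)
  also have "\<dots> \<le> c ^ m * exp (- r * c) * (exp \<bar>- h * c\<bar> * (- h * c)\<^sup>2) / \<bar>h\<bar>"
    using c by (intro divide_right_mono mult_left_mono abs_exp_minus_one_minus_le) auto
  also have "\<dots> = \<bar>h\<bar> * (c ^ Suc (Suc m) * exp ((\<bar>h\<bar> - r) * c))"
    using c h by (simp add: abs_mult power2_eq_square field_simps exp_add[symmetric])
  also have "\<dots> \<le> \<bar>h\<bar> * (c ^ Suc (Suc m) * exp (- (r / 2) * c))"
    using c h by (intro mult_left_mono exp_mono mult_right_mono) auto
  finally show ?thesis .
qed

lemma cosh_moment_diff_quotient_bound:
  fixes r h :: real assumes r: "0 < r" and h: "h \<noteq> 0" "\<bar>h\<bar> < r / 2"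
  shows "\<bar>(cosh_moment m (r + h) - cosh_moment m r) / h + cosh_moment (Suc m) r\<bar>
    \<le> \<bar>h\<bar> * cosh_moment (Suc (Suc m)) (r / 2)"
proof -
  have rh: "0 < r + h" using h r by linarith
  note I1 = set_integrable_cosh_moment[OF rh, of m]
    and I2 = set_integrable_cosh_moment[OF r, of m]
    and I3 = set_integrable_cosh_moment[OF r, of "Suc m"]
  have I4: "set_integrable lborel {0..}
      (\<lambda>u. \<bar>h\<bar> * (cosh u ^ Suc (Suc m) * exp (- (r / 2) * cosh u)))"
    using set_integrable_cosh_moment[of "r / 2" "Suc (Suc m)"] r by simp
  define F where "F u = (cosh u ^ m * exp (- (r + h) * cosh u) - cosh u ^ m * exp (- r * cosh u)) / h
      + cosh u ^ Suc m * exp (- r * cosh u)" for u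
  have IF: "set_integrable lborel {0..} F"
    unfolding F_def using I1 I2 I3
    by (intro set_integral_add set_integrable_divide set_integral_diff) auto
  have eqF: "(LINT u:{0..}|lborel. F u)
      = (cosh_moment m (r + h) - cosh_moment m r) / h + cosh_moment (Suc m) r"
    unfolding F_def cosh_moment_def using I1 I2 I3
    by (subst set_integral_add) (auto intro!: set_integrable_divide set_integral_diff)
  have "\<bar>F u\<bar> \<le> \<bar>h\<bar> * (cosh u ^ Suc (Suc m) * exp (- (r / 2) * cosh u))" for u
    unfolding F_def using h cosh_real_nonneg by (intro cosh_moment_quotient_integrand_bound) auto
  hence "\<bar>LINT u:{0..}|lborel. F u\<bar>
      \<le> (LINT u:{0..}|lborel. \<bar>h\<bar> * (cosh u ^ Suc (Suc m) * exp (- (r / 2) * cosh u)))"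
    using IF I4 unfolding set_lebesgue_integral_def set_integrable_def
    by (intro integral_abs_bound_integral) (auto simp: indicator_def)
  thus ?thesis unfolding eqF by (simp add: cosh_moment_def)
qed

lemma has_real_derivative_cosh_moment:
  fixes r :: real assumes r: "0 < r"
  shows "(cosh_moment m has_real_derivative - cosh_moment (Suc m) r) (at r)"
proof -
  have "\<forall>\<^sub>F h in at 0. norm ((cosh_moment m (r + h) - cosh_moment m r) / h - - cosh_moment (Suc m) r)
      \<le> \<bar>h\<bar> * cosh_moment (Suc (Suc m)) (r / 2)"
    unfolding eventually_at using r
    by (intro exI[of _ "r / 2"]) (auto intro!: cosh_moment_diff_quotient_bound simp: dist_norm)
  moreover have "((\<lambda>h. \<bar>h\<bar> * cosh_moment (Suc (Suc m)) (r / 2)) \<longlongrightarrow> 0) (at (0::real))"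
    by (rule tendsto_eq_intros refl)+ auto
  ultimately show ?thesis
    unfolding DERIV_def by (rule LIM_zero_cancel[OF Lim_null_comparison])
qed

lemma higher_deriv_cosh_moment:
  fixes r :: real assumes "0 < r"
  shows "(deriv ^^ n) (cosh_moment m) r = (- 1) ^ n * cosh_moment (m + n) r"
  using assms
proof (induction n arbitrary: r)
  case 0 thus ?case by simp
next
  case (Suc n)
  have "\<forall>\<^sub>F x in nhds r. (deriv ^^ n) (cosh_moment m) x = (- 1) ^ n * cosh_moment (m + n) x"
    using eventually_nhds_in_open[of "{0<..}" r] Suc by (auto elim!: eventually_mono)
  hence "(deriv ^^ Suc n) (cosh_moment m) r = deriv (\<lambda>x. (- 1) ^ n * cosh_moment (m + n) x) r"
    by (simp add: deriv_cong_ev)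
  also have "\<dots> = (- 1) ^ n * - cosh_moment (Suc (m + n)) r"
    by (intro DERIV_imp_deriv DERIV_cmult has_real_derivative_cosh_moment Suc.prems)
  finally show ?case by simp
qed

lemma cosh_moment_nonneg: "0 \<le> cosh_moment m r"
  unfolding cosh_moment_def set_lebesgue_integral_def
  by (intro integral_nonneg_AE AE_I2) (simp add: cosh_real_nonneg)

lemma g_fun_nonneg:
  fixes s :: real assumes s: "0 < s"
  shows "0 \<le> g_fun s"
proof -
  have K0''': "(deriv ^^ 3) besselK0 r = - cosh_moment 3 r" if "0 < r" for r
  proof -
    have "besselK0 = cosh_moment 0" by (auto simp: besselK0_def cosh_moment_def fun_eq_iff)
    thus ?thesis using higher_deriv_cosh_moment[OF that, of 3 0] by simp
  qed
  have "0 \<le> indicator {s<..} r *\<^sub>R (cosh_moment 3 r * r / sqrt (r\<^sup>2 - s\<^sup>2))" for r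
    using s cosh_moment_nonneg[of 3 r] by (auto simp: indicator_def)
  hence "0 \<le> (LINT r:{s<..}|lborel. cosh_moment 3 r * r / sqrt (r\<^sup>2 - s\<^sup>2))"
    unfolding set_lebesgue_integral_def by (intro integral_nonneg_AE AE_I2)
  moreover have "(LINT r:{s<..}|lborel. (deriv ^^ 3) besselK0 r * r / sqrt (r\<^sup>2 - s\<^sup>2))
      = - (LINT r:{s<..}|lborel. cosh_moment 3 r * r / sqrt (r\<^sup>2 - s\<^sup>2))"
    unfolding set_lebesgue_integral_def
    by (subst integral_minus[symmetric], rule Bochner_Integration.integral_cong)
      (use s in \<open>auto simp: indicator_def K0'''\<close>)
  ultimately show ?thesis using s by (simp add: g_fun_def)
qed

section \<open>The coefficients \<open>a\<^sub>n\<close> and their partial sums\<close>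

text \<open>In fact \<open>a\<^sub>n = n\<^bsup>n-2\<^esup>/(n-1)!\<close>, the Taylor coefficients of \<open>-W(-x)/x\<close>.\<close>

function theta_coeff :: "nat \<Rightarrow> real" where
  "theta_coeff n = (if n \<le> 1 then (if n = 1 then 1 else 0)
     else real n / (2 * (real n - 1)) * (\<Sum>j=1..n-1. theta_coeff j * theta_coeff (n - j)))"
  by auto
termination
  by (relation "Wellfounded.measure id") auto

declare theta_coeff.simps [simp del]

lemma theta_coeff_1 [simp]: "theta_coeff (Suc 0) = 1"
  by (simp add: theta_coeff.simps)

lemma theta_coeff_rec:
  "2 \<le> n \<Longrightarrow> theta_coeff n = real n / (2 * (real n - 1)) * (\<Sum>j=1..n-1. theta_coeff j * theta_coeff (n - j))"
  by (subst theta_coeff.simps) simp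

lemma theta_coeff_2 [simp]: "theta_coeff 2 = 1"
  by (subst theta_coeff_rec) auto

lemma theta_coeff_nonneg: "0 \<le> theta_coeff n"
proof (induction n rule: less_induct)
  case (less n)
  show ?case
  proof (cases "2 \<le> n")
    case True
    have "0 \<le> (\<Sum>j=1..n-1. theta_coeff j * theta_coeff (n - j))"
      using less True by (intro sum_nonneg mult_nonneg_nonneg) auto
    with True show ?thesis by (simp add: theta_coeff_rec)
  qed (auto simp: theta_coeff.simps)
qed

lemma theta_coeff_weighted_rec:
  assumes n: "2 \<le> n"
  shows "(real n - 1) * theta_coeff n = (\<Sum>j=1..n-1. real (n - j) * theta_coeff j * theta_coeff (n - j))"
proof -
  let ?a = theta_coeff
  have sym: "(\<Sum>j=1..n-1. real j * ?a j * ?a (n - j)) = (\<Sum>j=1..n-1. real (n - j) * ?a j * ?a (n - j))"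
  proof -
    have "(\<Sum>j=1..n-1. real j * ?a j * ?a (n - j))
        = (\<Sum>j=1..n-1. real (n - 1 + 1 - j) * ?a (n - 1 + 1 - j) * ?a (n - (n - 1 + 1 - j)))"
      by (rule sum.atLeastAtMost_rev)
    also have "\<dots> = (\<Sum>j=1..n-1. real (n - j) * ?a j * ?a (n - j))"
      using n by (intro sum.cong) auto
    finally show ?thesis .
  qed
  have "(\<Sum>j=1..n-1. real j * ?a j * ?a (n - j)) + (\<Sum>j=1..n-1. real (n - j) * ?a j * ?a (n - j))
      = real n * (\<Sum>j=1..n-1. ?a j * ?a (n - j))"
    unfolding sum.distrib[symmetric] sum_distrib_left
    by (intro sum.cong) (auto simp: algebra_simps)
  also have "\<dots> = 2 * ((real n - 1) * ?a n)"
    using n by (subst (2) theta_coeff_rec) (auto simp: field_simps)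
  finally show ?thesis using sym by simp
qed

lemma theta_coeff_convolution_power:
  fixes y :: real assumes n: "2 \<le> n"
  shows "(\<Sum>j=1..n-1. theta_coeff j * y ^ (j - 1) * (theta_coeff (n - j) * y ^ (n - j - 1)))
    = 2 * (real n - 1) / real n * theta_coeff n * y ^ (n - 2)"
proof -
  have "(\<Sum>j=1..n-1. theta_coeff j * y ^ (j - 1) * (theta_coeff (n - j) * y ^ (n - j - 1)))
      = (\<Sum>j=1..n-1. theta_coeff j * theta_coeff (n - j)) * y ^ (n - 2)"
    unfolding sum_distrib_right
  proof (intro sum.cong refl)
    fix j assume "j \<in> {1..n-1}"
    hence "y ^ (j - 1) * y ^ (n - j - 1) = y ^ (n - 2)"
      unfolding power_add[symmetric] by (intro arg_cong[where f = "power y"]) auto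
    thus "theta_coeff j * y ^ (j - 1) * (theta_coeff (n - j) * y ^ (n - j - 1))
        = theta_coeff j * theta_coeff (n - j) * y ^ (n - 2)"
      by (metis mult.assoc mult.left_commute)
  qed
  also have "(\<Sum>j=1..n-1. theta_coeff j * theta_coeff (n - j)) = 2 * (real n - 1) / real n * theta_coeff n"
    using n by (subst (2) theta_coeff_rec) (auto simp: field_simps)
  finally show ?thesis .
qed

text \<open>Coefficientwise this is \<open>x\<^sup>2 Q' \<le> x Q (x (x Q)')\<close>; for the full series it is an equality.\<close>

lemma theta_coeff_truncation_le:
  fixes x :: real assumes x: "0 \<le> x"
  shows "(\<Sum>n=1..N. real (n - 1) * theta_coeff n * x ^ n)
    \<le> (\<Sum>n=1..N. theta_coeff n * x ^ n) * (\<Sum>n=1..N. real n * theta_coeff n * x ^ n)"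
proof -
  define g where "g = (\<lambda>(j, m). theta_coeff j * x ^ j * (real m * theta_coeff m * x ^ m))"
  have g_nonneg: "0 \<le> g p" for p
    using x theta_coeff_nonneg by (auto simp: g_def split: prod.splits)
  have "(\<Sum>n=1..N. real (n - 1) * theta_coeff n * x ^ n) = (\<Sum>n=1..N. \<Sum>j=1..n-1. g (j, n - j))"
  proof (intro sum.cong refl)
    fix n assume n: "n \<in> {1..N}"
    show "real (n - 1) * theta_coeff n * x ^ n = (\<Sum>j=1..n-1. g (j, n - j))"
    proof (cases "n = 1")
      case False
      hence "real (n - 1) * theta_coeff n = (\<Sum>j=1..n-1. real (n - j) * theta_coeff j * theta_coeff (n - j))"
        using n theta_coeff_weighted_rec[of n] by (simp add: of_nat_diff)
      hence "real (n - 1) * theta_coeff n * x ^ n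
          = (\<Sum>j=1..n-1. real (n - j) * theta_coeff j * theta_coeff (n - j) * x ^ n)"
        by (simp add: sum_distrib_right)
      also have "\<dots> = (\<Sum>j=1..n-1. g (j, n - j))"
        unfolding g_def by (intro sum.cong refl) (auto simp: mult_ac simp flip: power_add)
      finally show ?thesis .
    qed simp
  qed
  also have "\<dots> = (\<Sum>(j, m)\<in>{(j, m). 1 \<le> j \<and> 1 \<le> m \<and> j + m \<le> N}. g (j, m))"
    by (subst sum.Sigma, simp, simp)
      (rule sum.reindex_bij_witness[where i="\<lambda>(j, m). (j + m, j)" and j="\<lambda>(n, j). (j, n - j)"], auto)
  also have "\<dots> \<le> (\<Sum>(j, m)\<in>{1..N} \<times> {1..N}. g (j, m))"
    by (intro sum_mono2) (auto simp: g_nonneg)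
  also have "\<dots> = (\<Sum>n=1..N. theta_coeff n * x ^ n) * (\<Sum>n=1..N. real n * theta_coeff n * x ^ n)"
    by (simp add: sum.cartesian_product [symmetric] sum_product g_def)
  finally show ?thesis .
qed

definition theta_poly :: "nat \<Rightarrow> real \<Rightarrow> real" where
  "theta_poly N x = (\<Sum>n=1..N. theta_coeff n * x ^ (n - 1))"

definition theta_poly_deriv :: "nat \<Rightarrow> real \<Rightarrow> real" where
  "theta_poly_deriv N x = (\<Sum>n=1..N. theta_coeff n * (real (n - 1) * x ^ (n - 2)))"

lemma theta_poly_eq_sum_lessThan: "theta_poly N x = (\<Sum>n<N. theta_coeff (Suc n) * x ^ n)"
  by (induction N) (auto simp: theta_poly_def)

lemma has_real_derivative_theta_poly: "(theta_poly N has_real_derivative theta_poly_deriv N x) (at x)"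
  unfolding theta_poly_def theta_poly_deriv_def
  by (auto intro!: derivative_eq_intros sum.cong simp: numeral_2_eq_2)

lemma theta_poly_nonneg: "0 \<le> x \<Longrightarrow> 0 \<le> theta_poly N x"
  unfolding theta_poly_def using theta_coeff_nonneg by (intro sum_nonneg mult_nonneg_nonneg) auto

lemma theta_poly_0_le: "theta_poly N 0 \<le> 1"
proof -
  have "theta_poly N 0 = (\<Sum>n=1..N. if n = 1 then theta_coeff n else 0)"
    unfolding theta_poly_def by (intro sum.cong refl) auto
  also have "\<dots> \<le> 1" by (simp add: sum.delta)
  finally show ?thesis .
qed

lemma theta_poly_deriv_le:
  fixes x :: real assumes x: "0 < x"
  shows "theta_poly_deriv N x \<le> theta_poly N x * (theta_poly N x + x * theta_poly_deriv N x)"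
proof -
  have shift1: "x * x ^ (n - 1) = x ^ n" and shift2: "x\<^sup>2 * x ^ (n - 2) = x ^ n"
    if "2 \<le> n" for n
    using that by (metis power_eq_if not_numeral_le_zero, metis le_add_diff_inverse power_add)
  have P: "x * theta_poly N x = (\<Sum>n=1..N. theta_coeff n * x ^ n)"
    unfolding theta_poly_def sum_distrib_left
    by (intro sum.cong refl) (auto simp: mult_ac power_eq_if)
  have P': "x * (theta_poly N x + x * theta_poly_deriv N x) = (\<Sum>n=1..N. real n * theta_coeff n * x ^ n)"
    unfolding theta_poly_def theta_poly_deriv_def sum_distrib_left sum.distrib[symmetric]
  proof (intro sum.cong refl)
    fix n assume "n \<in> {1..N}"
    then consider "n = 1" | "2 \<le> n" by fastforce
    thus "x * (theta_coeff n * x ^ (n - 1) + x * (theta_coeff n * (real (n - 1) * x ^ (n - 2))))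
        = real n * theta_coeff n * x ^ n"
    proof cases
      case 2
      have "x * (theta_coeff n * x ^ (n - 1) + x * (theta_coeff n * (real (n - 1) * x ^ (n - 2))))
          = theta_coeff n * (x * x ^ (n - 1)) + real (n - 1) * theta_coeff n * (x\<^sup>2 * x ^ (n - 2))"
        by (simp add: algebra_simps power2_eq_square)
      also have "\<dots> = real n * theta_coeff n * x ^ n"
        unfolding shift1[OF 2] shift2[OF 2] using 2 by (simp add: of_nat_diff algebra_simps)
      finally show ?thesis .
    qed simp
  qed
  have Q': "x\<^sup>2 * theta_poly_deriv N x = (\<Sum>n=1..N. real (n - 1) * theta_coeff n * x ^ n)"
    unfolding theta_poly_deriv_def sum_distrib_left
  proof (intro sum.cong refl)
    fix n assume "n \<in> {1..N}"
    then consider "n = 1" | "2 \<le> n" by fastforce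
    thus "x\<^sup>2 * (theta_coeff n * (real (n - 1) * x ^ (n - 2))) = real (n - 1) * theta_coeff n * x ^ n"
      by cases (use shift2 in \<open>auto simp: algebra_simps\<close>)
  qed
  have "x\<^sup>2 * theta_poly_deriv N x \<le> x\<^sup>2 * (theta_poly N x * (theta_poly N x + x * theta_poly_deriv N x))"
    using theta_coeff_truncation_le[of x N] x unfolding Q' P[symmetric] P'[symmetric]
    by (simp add: power2_eq_square mult_ac)
  thus ?thesis using x by simp
qed

lemma theta_poly_mult_exp_le_one:
  fixes x :: real assumes x: "0 \<le> x"
  shows "theta_poly N x * exp (- (x * theta_poly N x)) \<le> 1"
proof -
  define h where "h y = theta_poly N y * exp (- (y * theta_poly N y))" for y
  have h': "(h has_real_derivative exp (- (y * theta_poly N y)) *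
      (theta_poly_deriv N y - theta_poly N y * (theta_poly N y + y * theta_poly_deriv N y))) (at y)" for y :: real
    unfolding h_def
    by (rule derivative_eq_intros has_real_derivative_theta_poly refl)+ (simp add: algebra_simps)
  have "h x \<le> h 0"
  proof (rule DERIV_nonpos_imp_decreasing_open[OF x])
    fix y :: real assume "0 < y"
    hence "exp (- (y * theta_poly N y)) *
        (theta_poly_deriv N y - theta_poly N y * (theta_poly N y + y * theta_poly_deriv N y)) \<le> 0"
      using theta_poly_deriv_le[of y N] by (intro mult_nonneg_nonpos) auto
    with h' show "\<exists>d. (h has_real_derivative d) (at y) \<and> d \<le> 0" by blast
  next
    show "continuous_on {0..x} h"
      using h' by (intro DERIV_continuous_on) (rule DERIV_subset, auto)
  qed
  thus ?thesis using theta_poly_0_le[of N] by (simp add: h_def)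
qed

section \<open>Comparison with the Lambert \<open>W\<close> function\<close>

lemma mult_exp_minus_strict_mono:
  fixes y1 y2 :: real assumes "y1 < y2" "y2 \<le> 1"
  shows "y1 * exp (- y1) < y2 * exp (- y2)"
proof (rule DERIV_pos_imp_increasing_open[OF assms(1)])
  fix y assume "y1 < y" "y < y2"
  hence "0 < (1 - y) * exp (- y)" using assms by simp
  moreover have "((\<lambda>y. y * exp (- y)) has_real_derivative (1 - y) * exp (- y)) (at y)"
    by (rule derivative_eq_intros refl)+ (simp add: algebra_simps)
  ultimately show "\<exists>d. ((\<lambda>y. y * exp (- y)) has_real_derivative d) (at y) \<and> 0 < d" by blast
qed (intro continuous_intros)

lemma lambertW_minus_mult_exp_minus:
  fixes w :: real assumes "w \<le> 1"
  shows "lambertW (- (w * exp (- w))) = - w"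
  unfolding lambertW_def
proof (rule the_equality)
  fix v assume v: "- 1 \<le> v \<and> v * exp v = - (w * exp (- w))"
  hence eq: "- v * exp (- (- v)) = w * exp (- w)" by simp
  show "v = - w"
  proof (rule ccontr)
    assume "v \<noteq> - w"
    then consider "- v < w" | "w < - v" by linarith
    thus False
      using mult_exp_minus_strict_mono[of "- v" w] mult_exp_minus_strict_mono[of w "- v"] eq v assms
      by cases auto
  qed
qed (use assms in auto)

lemma le_neg_lambertW:
  fixes x :: real and p :: "real \<Rightarrow> real"
  assumes x: "0 \<le> x" "x < exp (- 1)" and p_cont: "continuous_on {0..x} p"
    and p_nonneg: "\<And>y. y \<in> {0..x} \<Longrightarrow> 0 \<le> p y"
    and p_bound: "\<And>y. y \<in> {0..x} \<Longrightarrow> p y * exp (- p y) \<le> y"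
  shows "p x \<le> - lambertW (- x)"
proof -
  obtain w where w: "0 \<le> w" "w \<le> 1" "w * exp (- w) = x"
  proof -
    have "continuous_on {0..1} (\<lambda>w::real. w * exp (- w))" by (intro continuous_intros)
    thus ?thesis using IVT'[of "\<lambda>w. w * exp (- w)" 0 x 1] x that by (auto simp: exp_minus)
  qed
  have "p x \<le> w"
  proof (rule ccontr)
    assume "\<not> p x \<le> w"
    show False
    proof (cases "p x \<le> 1")
      case True
      thus False
        using mult_exp_minus_strict_mono[of w "p x"] \<open>\<not> p x \<le> w\<close> p_bound[of x] x w by auto
    next
      case False
      have "p 0 = 0" using p_nonneg[of 0] p_bound[of 0] x by (auto simp: mult_le_0_iff)
      then obtain y where y: "0 \<le> y" "y \<le> x" "p y = 1"
        using IVT'[of p 0 1 x] False x p_cont by auto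
      thus False using p_bound[of y] x by simp
    qed
  qed
  thus ?thesis using w lambertW_minus_mult_exp_minus[of w] by simp
qed

lemma theta_poly_le_negW_quot:
  fixes x :: real assumes x: "0 \<le> x" "x < exp (- 1)"
  shows "theta_poly N x \<le> negW_quot x"
proof (cases "x = 0")
  case True thus ?thesis using theta_poly_0_le by (simp add: negW_quot_def)
next
  case False
  have "x * theta_poly N x \<le> - lambertW (- x)"
  proof (rule le_neg_lambertW[OF x])
    show "continuous_on {0..x} (\<lambda>y. y * theta_poly N y)"
      using has_real_derivative_theta_poly
      by (intro continuous_intros DERIV_continuous_on) (rule DERIV_subset, auto)
    fix y assume "y \<in> {0..x}"
    hence "0 \<le> y" by simp
    thus "0 \<le> y * theta_poly N y" by (simp add: theta_poly_nonneg)
    show "y * theta_poly N y * exp (- (y * theta_poly N y)) \<le> y"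
      using mult_left_mono[OF theta_poly_mult_exp_le_one[OF \<open>0 \<le> y\<close>] \<open>0 \<le> y\<close>] by (simp add: mult_ac)
  qed
  thus ?thesis using False x by (simp add: negW_quot_def field_simps)
qed

lemma theta_series_le_negW_quot:
  fixes x y :: real assumes "0 \<le> x" "x \<le> y" "y < exp (- 1)"
  shows "summable (\<lambda>n. theta_coeff (Suc n) * x ^ n)
    \<and> (\<Sum>n. theta_coeff (Suc n) * x ^ n) \<le> negW_quot y"
proof -
  have nonneg: "0 \<le> theta_coeff (Suc n) * x ^ n" for n
    using assms theta_coeff_nonneg by simp
  have bound: "(\<Sum>n<N. theta_coeff (Suc n) * x ^ n) \<le> negW_quot y" for N
  proof -
    have "(\<Sum>n<N. theta_coeff (Suc n) * x ^ n) \<le> theta_poly N y"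
      unfolding theta_poly_eq_sum_lessThan
      using assms theta_coeff_nonneg by (intro sum_mono mult_left_mono power_mono) auto
    also have "\<dots> \<le> negW_quot y"
      using assms by (intro theta_poly_le_negW_quot) auto
    finally show ?thesis .
  qed
  have "summable (\<lambda>n. theta_coeff (Suc n) * x ^ n)"
    by (rule summableI_nonneg_bounded[OF nonneg bound])
  with bound show ?thesis by (auto intro: suminf_le_const)
qed

section \<open>The coefficient equations\<close>

lemma pos_on_interval_if_increasing_at_zeros:
  fixes f :: "real \<Rightarrow> real"
  assumes cont: "continuous_on {a..b} f" and fa: "0 < f a"
    and zeros: "\<And>x. x \<in> {a..b} \<Longrightarrow> f x = 0 \<Longrightarrow> \<exists>d>0. (f has_real_derivative d) (at x within {a..b})"
    and s: "s \<in> {a..b}"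
  shows "0 < f s"
proof (rule ccontr)
  assume "\<not> 0 < f s"
  have cont_a: "continuous_on {a..y} f" if "y \<in> {a..b}" for y
    using that by (intro continuous_on_subset[OF cont]) auto
  define Z where "Z = {x \<in> {a..s}. f x = 0}"
  have "Z \<noteq> {}"
    using IVT2'[of f s 0 a] \<open>\<not> 0 < f s\<close> fa s cont_a[OF s] by (auto simp: Z_def)
  moreover have "closed Z"
    unfolding Z_def using cont_a[OF s] by (intro continuous_closed_preimage_constant) auto
  moreover have "bdd_below Z" by (auto simp: Z_def bdd_below_def)
  ultimately have "Inf Z \<in> Z" by (intro closed_contains_Inf)
  define z where "z = Inf Z"
  have z: "a \<le> z" "z \<le> s" "f z = 0" using \<open>Inf Z \<in> Z\<close> by (auto simp: Z_def z_def)
  have z_least: "z \<le> y" if "y \<in> Z" for y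
    unfolding z_def using that \<open>bdd_below Z\<close> by (rule cInf_lower)
  have "a < z" using z fa by (cases "z = a") auto
  have zI: "z \<in> {a..b}" using z s by auto
  obtain d where "0 < d" and d: "\<And>h. 0 < h \<Longrightarrow> z - h \<in> {a..b} \<Longrightarrow> h < d \<Longrightarrow> f (z - h) < f z"
    using zeros[OF zI z(3)] has_real_derivative_pos_inc_left by metis
  define h where "h = min (d / 2) ((z - a) / 2)"
  have "0 < h" using \<open>0 < d\<close> \<open>a < z\<close> by (simp add: h_def)
  moreover have "h \<le> d / 2" "h \<le> (z - a) / 2"
    unfolding h_def by (rule min.cobounded1, rule min.cobounded2)
  ultimately have h: "0 < h" "h < d" "a \<le> z - h" "z - h \<in> {a..b}"
    using \<open>0 < d\<close> z s by auto
  have "f (z - h) < 0" using d[OF h(1,4,2)] z(3) by simp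
  then obtain y where y: "a \<le> y" "y \<le> z - h" "f y = 0"
    using IVT2'[of f "z - h" 0 a] h fa cont_a[OF h(4)] by auto
  hence "y \<in> Z" using z h by (auto simp: Z_def)
  with z_least y h show False by fastforce
qed

lemma nonincreasing_if_deriv_within_nonpos:
  fixes f f' :: "real \<Rightarrow> real"
  assumes "a \<le> b"
    and "\<And>x. x \<in> {a..b} \<Longrightarrow> (f has_real_derivative f' x) (at x within {a..b})"
    and "\<And>x. x \<in> {a..b} \<Longrightarrow> f' x \<le> 0"
  shows "f b \<le> f a"
proof -
  have "(f' has_integral (f b - f a)) {a..b}"
    using assms by (intro fundamental_theorem_of_calculus)
      (auto simp flip: has_real_derivative_iff_has_vector_derivative)
  hence "f b - f a \<le> 0"
    by (rule has_integral_le[OF _ has_integral_0]) (use assms(3) in auto)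
  thus ?thesis by simp
qed

text \<open>\<open>H\<close> is an integrating factor: \<open>(E/H\<^sup>m)' = -m q E/H\<^bsup>m+1\<^esup>\<close>, so \<open>(E/H\<^sup>m)\<^sup>2\<close> is
  nonincreasing; no integrability of \<open>p\<close> is needed.\<close>

lemma linear_ode_vanishes:
  fixes E H p q :: "real \<Rightarrow> real" and m :: nat
  assumes s: "s \<in> {a..b}" and E_a: "E a = 0"
    and H_pos: "\<And>x. x \<in> {a..b} \<Longrightarrow> 0 < H x" and q_nonneg: "\<And>x. x \<in> {a..b} \<Longrightarrow> 0 \<le> q x"
    and H': "\<And>x. x \<in> {a..b} \<Longrightarrow> (H has_real_derivative p x * H x + q x) (at x within {a..b})"
    and E': "\<And>x. x \<in> {a..b} \<Longrightarrow> (E has_real_derivative real m * p x * E x) (at x within {a..b})"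
  shows "E s = 0"
proof -
  define V where "V x = (E x / H x ^ m)\<^sup>2" for x
  have V': "(V has_real_derivative - 2 * real m * q x * V x / H x) (at x within {a..b})"
    if x: "x \<in> {a..b}" for x
  proof -
    have Hx: "0 < H x" by (rule H_pos[OF x])
    have W': "((\<lambda>x. E x / H x ^ m) has_real_derivative - real m * q x * (E x / H x ^ m) / H x)
        (at x within {a..b})"
    proof -
      have "((\<lambda>x. H x ^ m) has_real_derivative real m * (p x * H x + q x) * H x ^ m / H x)
          (at x within {a..b})"
        by (rule DERIV_cong[OF DERIV_power[OF H'[OF x]]]) (cases m, use Hx in auto)
      thus ?thesis
        by (rule DERIV_cong[OF DERIV_divide[OF E'[OF x]]]) (use Hx in \<open>auto simp: field_simps\<close>)
    qed
    show ?thesis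
      unfolding V_def
      by (rule DERIV_cong[OF DERIV_power[OF W', of 2]]) (simp add: power2_eq_square mult_ac)
  qed
  have "V s \<le> V a"
  proof (rule nonincreasing_if_deriv_within_nonpos[of a s V "\<lambda>x. - 2 * real m * q x * V x / H x"])
    show "a \<le> s" using s by simp
    fix x assume x: "x \<in> {a..s}"
    hence xab: "x \<in> {a..b}" using s by auto
    show "(V has_real_derivative - 2 * real m * q x * V x / H x) (at x within {a..s})"
      using s by (intro DERIV_subset[OF V'[OF xab]]) auto
    show "- 2 * real m * q x * V x / H x \<le> 0"
      using H_pos[OF xab] q_nonneg[OF xab] by (simp add: V_def)
  qed
  hence "(E s / H s ^ m)\<^sup>2 \<le> 0" by (simp add: V_def E_a)
  thus ?thesis using H_pos[OF s] by simp
qed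

locale theta_ode =
  fixes B \<Gamma> :: "real \<Rightarrow> real" and t0 t :: real and C :: "nat \<Rightarrow> real \<Rightarrow> real"
  assumes t0_pos: "0 < t0" and t0_le_t: "t0 \<le> t"
    and Gamma_eq: "\<And>s. \<Gamma> s = pi * s\<^sup>2 / 2 * B s"
    and C_1: "\<And>s. s \<in> {t0..t} \<Longrightarrow> C 1 s = 1"
    and C_init: "\<And>n. 2 \<le> n \<Longrightarrow> C n t0 = 0"
    and C_deriv: "\<And>n s. 2 \<le> n \<Longrightarrow> s \<in> {t0..t} \<Longrightarrow>
      (C n has_real_derivative (real n - 1) * B s * C n s
        + real n * \<Gamma> s / 2 * (\<Sum>j=1..n-1. C j s * C (n - j) s)) (at s within {t0..t})"
begin

lemma C2_deriv: "s \<in> {t0..t} \<Longrightarrow> (C 2 has_real_derivative B s * C 2 s + \<Gamma> s) (at s within {t0..t})"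
  using C_deriv[of 2 s] C_1[of s] by simp

text \<open>With \<open>\<Gamma> = (\<pi> s\<^sup>2/2) B\<close> the equation \<open>C\<^sub>2' = B C\<^sub>2 + \<Gamma>\<close> becomes \<open>H' = B H + \<pi> s\<close>.
  Since \<open>H > 0\<close>, \<open>B = (ln H)' - \<pi> s/H\<close> then has a primitive, although \<open>B\<close> is not assumed
  to be integrable.\<close>

definition H :: "real \<Rightarrow> real" where
  "H s = C 2 s + pi * s\<^sup>2 / 2"

lemma H_deriv: "s \<in> {t0..t} \<Longrightarrow> (H has_real_derivative B s * H s + pi * s) (at s within {t0..t})"
proof -
  assume s: "s \<in> {t0..t}"
  have "((\<lambda>s. C 2 s + pi * s\<^sup>2 / 2) has_real_derivative (B s * C 2 s + \<Gamma> s) + pi * s)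
      (at s within {t0..t})"
    by (intro DERIV_add C2_deriv[OF s]) (auto intro!: derivative_eq_intros)
  thus ?thesis
    unfolding H_def[abs_def] by (rule DERIV_cong) (simp add: Gamma_eq algebra_simps)
qed

lemma H_pos: "s \<in> {t0..t} \<Longrightarrow> 0 < H s"
proof (rule pos_on_interval_if_increasing_at_zeros[of t0 t H s])
  show "continuous_on {t0..t} H" by (rule DERIV_continuous_on[OF H_deriv])
  show "0 < H t0" using C_init[of 2] t0_pos by (simp add: H_def)
  fix x assume x: "x \<in> {t0..t}" and "H x = 0"
  hence "(H has_real_derivative pi * x) (at x within {t0..t})" using H_deriv[OF x] by simp
  moreover have "0 < pi * x" using x t0_pos by simp
  ultimately show "\<exists>d>0. (H has_real_derivative d) (at x within {t0..t})" by blast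
qed

lemma C_minus_power_deriv:
  assumes n: "3 \<le> n" and x: "x \<in> {t0..t}"
    and IH: "\<And>j. 1 \<le> j \<Longrightarrow> j < n \<Longrightarrow> C j x = theta_coeff j * C 2 x ^ (j - 1)"
  shows "((\<lambda>x. C n x - theta_coeff n * C 2 x ^ (n - 1)) has_real_derivative
    real (n - 1) * B x * (C n x - theta_coeff n * C 2 x ^ (n - 1))) (at x within {t0..t})"
proof -
  have "(\<Sum>j=1..n-1. C j x * C (n - j) x)
      = (\<Sum>j=1..n-1. theta_coeff j * C 2 x ^ (j - 1) * (theta_coeff (n - j) * C 2 x ^ (n - j - 1)))"
  proof (intro sum.cong refl)
    fix j assume j: "j \<in> {1..n-1}"
    have "C j x = theta_coeff j * C 2 x ^ (j - 1)" using j by (intro IH) auto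
    moreover have "C (n - j) x = theta_coeff (n - j) * C 2 x ^ (n - j - 1)" using j by (intro IH) auto
    ultimately show "C j x * C (n - j) x
        = theta_coeff j * C 2 x ^ (j - 1) * (theta_coeff (n - j) * C 2 x ^ (n - j - 1))"
      by (simp only:)
  qed
  also have "\<dots> = 2 * (real n - 1) / real n * theta_coeff n * C 2 x ^ (n - 2)"
    using n by (intro theta_coeff_convolution_power) simp
  finally have conv: "(\<Sum>j=1..n-1. C j x * C (n - j) x) = \<dots>" .
  have n2: "2 \<le> n" using n by simp
  have "n - 1 = Suc (n - 2)" using n by arith
  hence pow: "C 2 x ^ (n - 1) = C 2 x * C 2 x ^ (n - 2)" "n - 1 - Suc 0 = n - 2" by simp_all
  have alg: "(real n - 1) * b * c + real n * g / 2 * (2 * (real n - 1) / real n * a * p)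
      - a * (real (n - 1) * ((b * y + g) * p)) = real (n - 1) * b * (c - a * (y * p))" for a b c g p y
  proof -
    have "real n \<noteq> 0" "real (n - 1) = real n - 1" using n by auto
    thus ?thesis by (simp add: field_simps)
  qed
  have "((\<lambda>x. C 2 x ^ (n - 1)) has_real_derivative
      real (n - 1) * ((B x * C 2 x + \<Gamma> x) * C 2 x ^ (n - 1 - Suc 0))) (at x within {t0..t})"
    by (rule DERIV_power[OF C2_deriv[OF x]])
  from DERIV_diff[OF C_deriv[OF n2 x] DERIV_cmult[OF this, of "theta_coeff n"]]
  show ?thesis
    unfolding conv pow(2) by (rule DERIV_cong) (simp_all only: alg pow(1))
qed

lemma C_eq_theta_coeff_power:
  "1 \<le> n \<Longrightarrow> s \<in> {t0..t} \<Longrightarrow> C n s = theta_coeff n * C 2 s ^ (n - 1)"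
proof (induction n arbitrary: s rule: less_induct)
  case (less n)
  consider "n = 1" | "n = 2" | "3 \<le> n" using less.prems by linarith
  thus ?case
  proof cases
    case 3
    have "C n s - theta_coeff n * C 2 s ^ (n - 1) = 0"
    proof (rule linear_ode_vanishes[where E = "\<lambda>x. C n x - theta_coeff n * C 2 x ^ (n - 1)"
          and a = t0 and b = t and s = s and H = H and p = B and q = "\<lambda>x. pi * x" and m = "n - 1"])
      show "s \<in> {t0..t}" by (rule less.prems)
      show "C n t0 - theta_coeff n * C 2 t0 ^ (n - 1) = 0" using C_init 3 by simp
      fix x assume x: "x \<in> {t0..t}"
      show "0 < H x" "0 \<le> pi * x" "(H has_real_derivative B x * H x + pi * x) (at x within {t0..t})"
        using H_pos[OF x] H_deriv[OF x] x t0_pos by auto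
      show "((\<lambda>x. C n x - theta_coeff n * C 2 x ^ (n - 1)) has_real_derivative
          real (n - 1) * B x * (C n x - theta_coeff n * C 2 x ^ (n - 1))) (at x within {t0..t})"
      proof (rule C_minus_power_deriv[OF 3 x])
        fix j assume "1 \<le> j" "j < n"
        thus "C j x = theta_coeff j * C 2 x ^ (j - 1)" by (intro less.IH x)
      qed
    qed
    thus ?thesis by simp
  qed (use C_1 less.prems in auto)
qed

definition B_primitive :: "real \<Rightarrow> real" where
  "B_primitive s = ln (H s) - integral {t0..s} (\<lambda>r. pi * r / H r)"

lemma B_primitive_deriv:
  assumes s: "s \<in> {t0..t}"
  shows "(B_primitive has_real_derivative B s) (at s within {t0..t})"
proof -
  have "continuous_on {t0..t} (\<lambda>r. pi * r / H r)"
    using H_pos DERIV_continuous_on[OF H_deriv] by (intro continuous_intros) force+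
  hence "((\<lambda>s. integral {t0..s} (\<lambda>r. pi * r / H r)) has_real_derivative pi * s / H s) (at s within {t0..t})"
    using integral_has_real_derivative[OF _ s] by simp
  moreover have "((\<lambda>s. ln (H s)) has_real_derivative (B s * H s + pi * s) / H s) (at s within {t0..t})"
    using H_pos[OF s] by (auto intro!: derivative_eq_intros H_deriv[OF s])
  ultimately have "(B_primitive has_real_derivative (B s * H s + pi * s) / H s - pi * s / H s)
      (at s within {t0..t})"
    unfolding B_primitive_def[abs_def] by (rule DERIV_diff[rotated])
  thus ?thesis by (rule DERIV_cong) (use H_pos[OF s] in \<open>simp add: field_simps\<close>)
qed

lemma B_has_integral: "s \<in> {t0..t} \<Longrightarrow> (B has_integral B_primitive t - B_primitive s) {s..t}"
  by (intro fundamental_theorem_of_calculus)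
    (auto simp flip: has_real_derivative_iff_has_vector_derivative
      intro!: DERIV_subset[OF B_primitive_deriv])

lemma integral_B: "s \<in> {t0..t} \<Longrightarrow> integral {s..t} B = B_primitive t - B_primitive s"
  by (rule integral_unique[OF B_has_integral])

lemma C2_has_integral: "((\<lambda>s. \<Gamma> s * exp (integral {s..t} B)) has_integral C 2 t) {t0..t}"
proof -
  have "((\<lambda>s. C 2 s * exp (B_primitive t - B_primitive s)) has_real_derivative
      \<Gamma> s * exp (B_primitive t - B_primitive s)) (at s within {t0..t})" if s: "s \<in> {t0..t}" for s
  proof -
    have "((\<lambda>s. exp (B_primitive t - B_primitive s)) has_real_derivative
        exp (B_primitive t - B_primitive s) * (0 - B s)) (at s within {t0..t})"
      by (intro DERIV_chain2[OF DERIV_exp] DERIV_diff DERIV_const B_primitive_deriv[OF s])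
    from DERIV_mult[OF C2_deriv[OF s] this] show ?thesis
      by (rule DERIV_cong) (simp add: algebra_simps)
  qed
  hence "((\<lambda>s. \<Gamma> s * exp (B_primitive t - B_primitive s)) has_integral
      C 2 t * exp (B_primitive t - B_primitive t) - C 2 t0 * exp (B_primitive t - B_primitive t0)) {t0..t}"
    using t0_le_t by (intro fundamental_theorem_of_calculus)
      (auto simp flip: has_real_derivative_iff_has_vector_derivative)
  hence "((\<lambda>s. \<Gamma> s * exp (B_primitive t - B_primitive s)) has_integral C 2 t) {t0..t}"
    using C_init[of 2] by simp
  thus ?thesis by (rule has_integral_eq[rotated]) (simp add: integral_B)
qed

lemma Gamma_exp_integrable:
  assumes c: "0 < c"
  shows "(\<lambda>s. \<Gamma> s * exp (c * integral {s..t} B)) integrable_on {t0..t}"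
proof -
  define L where "L s = - (pi / (2 * c)) * s\<^sup>2 * exp (c * (B_primitive t - B_primitive s))" for s
  have "(L has_real_derivative \<Gamma> s * exp (c * (B_primitive t - B_primitive s))
      - pi * s / c * exp (c * (B_primitive t - B_primitive s))) (at s within {t0..t})"
    if s: "s \<in> {t0..t}" for s
  proof -
    have "((\<lambda>s. - (pi / (2 * c)) * s\<^sup>2) has_real_derivative - (pi / (2 * c)) * (2 * s)) (at s within {t0..t})"
      using c by (auto intro!: derivative_eq_intros)
    moreover have "((\<lambda>s. exp (c * (B_primitive t - B_primitive s))) has_real_derivative
        exp (c * (B_primitive t - B_primitive s)) * (c * (0 - B s))) (at s within {t0..t})"
      by (intro DERIV_chain2[OF DERIV_exp] DERIV_cmult DERIV_diff DERIV_const B_primitive_deriv[OF s])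
    ultimately have "(L has_real_derivative - (pi / (2 * c)) * (2 * s) * exp (c * (B_primitive t - B_primitive s))
        + exp (c * (B_primitive t - B_primitive s)) * (c * (0 - B s)) * (- (pi / (2 * c)) * s\<^sup>2))
        (at s within {t0..t})"
      unfolding L_def by (rule DERIV_mult)
    thus ?thesis
      by (rule DERIV_cong) (use c in \<open>simp add: Gamma_eq field_simps power2_eq_square\<close>)
  qed
  hence "(\<lambda>s. \<Gamma> s * exp (c * (B_primitive t - B_primitive s))
      - pi * s / c * exp (c * (B_primitive t - B_primitive s))) integrable_on {t0..t}"
    using t0_le_t by (intro has_integral_integrable[OF fundamental_theorem_of_calculus])
      (auto simp flip: has_real_derivative_iff_has_vector_derivative)
  moreover have "(\<lambda>s. pi * s / c * exp (c * (B_primitive t - B_primitive s))) integrable_on {t0..t}"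
    using DERIV_continuous_on[OF B_primitive_deriv] c
    by (intro integrable_continuous_interval continuous_intros) auto
  ultimately have "(\<lambda>s. \<Gamma> s * exp (c * (B_primitive t - B_primitive s))) integrable_on {t0..t}"
    by (rule integrable_eq[OF integrable_add]) simp
  thus ?thesis by (rule integrable_eq) (simp add: integral_B)
qed

context
  assumes B_nonneg: "\<And>s. s \<in> {t0..t} \<Longrightarrow> 0 \<le> B s"
begin

lemma C2_nonneg: "0 \<le> C 2 t"
  by (rule has_integral_nonneg[OF C2_has_integral])
    (auto intro!: mult_nonneg_nonneg simp: Gamma_eq B_nonneg)

lemma C2_le_Gamma_exp_integral:
  assumes c: "1 \<le> c"
  shows "C 2 t \<le> integral {t0..t} (\<lambda>s. \<Gamma> s * exp (c * integral {s..t} B))"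
proof -
  have "C 2 t = integral {t0..t} (\<lambda>s. \<Gamma> s * exp (integral {s..t} B))"
    by (rule integral_unique[OF C2_has_integral, symmetric])
  also have "\<dots> \<le> integral {t0..t} (\<lambda>s. \<Gamma> s * exp (c * integral {s..t} B))"
  proof (rule integral_le)
    show "(\<lambda>s. \<Gamma> s * exp (integral {s..t} B)) integrable_on {t0..t}"
      using C2_has_integral by blast
    show "(\<lambda>s. \<Gamma> s * exp (c * integral {s..t} B)) integrable_on {t0..t}"
      using c by (intro Gamma_exp_integrable) simp
    fix s assume s: "s \<in> {t0..t}"
    have "0 \<le> integral {s..t} B"
      using B_nonneg s by (intro has_integral_nonneg[OF B_has_integral[OF s, folded integral_B[OF s]]]) auto
    hence "integral {s..t} B \<le> c * integral {s..t} B"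
      using c by (simp add: mult_le_cancel_right1)
    thus "\<Gamma> s * exp (integral {s..t} B) \<le> \<Gamma> s * exp (c * integral {s..t} B)"
      using B_nonneg[OF s] t0_pos s by (intro mult_left_mono) (auto simp: Gamma_eq)
  qed
  finally show ?thesis .
qed

end

end


theorem proposition3p5:
  fixes \<beta> t0 t z :: real and k :: nat and C :: "nat \<Rightarrow> real \<Rightarrow> real"
  assumes "\<beta> > 0" and "0 < t0" and "t0 < t"
    and C1: "\<And>s. s \<in> {t0..t} \<Longrightarrow> C 1 s = 1"
    and Cinit: "\<And>n. n \<ge> 2 \<Longrightarrow> C n t0 = 0"
    and Cderiv: "\<And>n s. n \<ge> 2 \<Longrightarrow> s \<in> {t0..t} \<Longrightarrow>
        (C n has_real_derivative
           (real n - 1) * B_fun \<beta> s * C n s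
           + real n * Gamma_fun \<beta> s / 2 * (\<Sum>j=1..n-1. C j s * C (n - j) s))
        (at s within {t0..t})"
    and "k \<ge> 1"
    and "z \<ge> 0"
    and "exp 1 * z * tau \<beta> k t0 t < 1"
  shows "summable (\<lambda>n. C (Suc n) t * z ^ n)
     \<and> (\<Sum>n. C (Suc n) t * z ^ n) \<le> negW_quot (tau \<beta> k t0 t * z)"
proof -
  interpret theta_ode "B_fun \<beta>" "Gamma_fun \<beta>" t0 t C
    using assms(1-6) by unfold_locales (auto simp: Gamma_fun_def B_fun_def)
  have B_nonneg: "0 \<le> B_fun \<beta> s" if "s \<in> {t0..t}" for s
    using g_fun_nonneg[of s] that \<open>\<beta> > 0\<close> \<open>0 < t0\<close> by (simp add: B_fun_def)
  have "C 2 t \<le> tau \<beta> k t0 t"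
    unfolding tau_def using \<open>k \<ge> 1\<close> by (intro C2_le_Gamma_exp_integral B_nonneg) auto
  moreover have "0 \<le> C 2 t" by (rule C2_nonneg[OF B_nonneg])
  moreover have "tau \<beta> k t0 t * z < exp (- 1)"
    using \<open>exp 1 * z * tau \<beta> k t0 t < 1\<close> by (simp add: exp_minus field_simps)
  ultimately have "summable (\<lambda>n. theta_coeff (Suc n) * (C 2 t * z) ^ n)
      \<and> (\<Sum>n. theta_coeff (Suc n) * (C 2 t * z) ^ n) \<le> negW_quot (tau \<beta> k t0 t * z)"
    using \<open>z \<ge> 0\<close> by (intro theta_series_le_negW_quot mult_right_mono) auto
  moreover have "C (Suc n) t * z ^ n = theta_coeff (Suc n) * (C 2 t * z) ^ n" for n
    using C_eq_theta_coeff_power[of "Suc n" t] \<open>t0 < t\<close> by (simp add: power_mult_distrib)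
  ultimately show ?thesis by simp
qed

end
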